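(* Let $B\in\mathbb{R}^{k\times k}$ have an SVD $B=U\,\mathrm{diag}(\sigma_1,\dots,\sigma_k)V'$ with $\sigma_1>\sigma_2>\dots>\sigma_k>0$, and let $\tilde B=B+\Delta_B$. Let $\alpha_B=\min_{i\neq j}|\sigma_i-\sigma_j|$. If there exists $\epsilon>0$ with $$\|\Delta_B\|_F<\epsilon\le\frac{\alpha_B^2}{\sqrt{2}\Big(2\|B\|_F\big(1+\sqrt{1-\tfrac1k}\big)+\sqrt{\alpha_B^2+4\|B\|_F^2\big(1+\sqrt{1-\tfrac1k}\big)^2}\Big)},$$ then $\tilde B$ has an SVD $\tilde B=\tilde U\,\mathrm{diag}(\tilde\sigma_1,\dots,\tilde\sigma_k)\tilde V'$ with $\tilde\sigma_1\ge\dots\ge\tilde\sigma_k$ such that $\|U-\tilde U\|_F\le 2\sqrt{2}\,\dfrac{\epsilon}{\alpha_B}$. *)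

theory Defs
  imports "HOL-Analysis.Analysis"
begin

definition fro_norm :: "real^'n^'m \<Rightarrow> real" where
  "fro_norm A = sqrt (\<Sum>i\<in>UNIV. \<Sum>j\<in>UNIV. (A $ i $ j)^2)"

definition diag_mat :: "('k::finite \<Rightarrow> real) \<Rightarrow> real^'k^'k" where
  "diag_mat s = (\<chi> i j. if i = j then s i else 0)"

definition is_svd :: "real^'k^'k \<Rightarrow> real^'k^'k \<Rightarrow> ('k::finite \<Rightarrow> real) \<Rightarrow> real^'k^'k \<Rightarrow> bool" where
  "is_svd A U s V \<longleftrightarrow> orthogonal_matrix U \<and> orthogonal_matrix V \<and> (\<forall>i. 0 \<le> s i)
     \<and> A = U ** diag_mat s ** transpose V"

definition sv_gap :: "('k::finite \<Rightarrow> real) \<Rightarrow> real" where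
  "sv_gap s = Min {\<bar>s i - s j\<bar> | i j. i \<noteq> j}"

definition strict_decr :: "('k::linorder \<Rightarrow> real) \<Rightarrow> bool" where
  "strict_decr s \<longleftrightarrow> (\<forall>i j. i < j \<longrightarrow> s j < s i)"

definition weak_decr :: "('k::linorder \<Rightarrow> real) \<Rightarrow> bool" where
  "weak_decr s \<longleftrightarrow> (\<forall>i j. i \<le> j \<longrightarrow> s j \<le> s i)"

end

theory Submission
  imports Defs
begin

text \<open>
  An SVD of B + \<Delta> is built from an orthonormal
  eigenbasis of (B + \<Delta>)(B + \<Delta>)', obtained greedily by maximising the Rayleigh quotient on
  successive orthogonal complements; the sign of each left singular vector is chosen so that it
  makes a non-negative inner product with the corresponding column of U.
  Weyl's inequality \<bar>s j - \<sigma> j\<bar> \<le> \<parallel>\<Delta>\<parallel> together with \<epsilon> \<le> \<alpha>/4 separates s j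
  from every \<sigma> i, i \<noteq> j, by 3\<alpha>/4.
  In the singular bases of B the perturbation equations then bound each off-diagonal
  coordinate of the new left singular vectors, which gives
  (3\<alpha>/4)^2 \<parallel>U - U'\<parallel>^2 \<le> 4 \<parallel>\<Delta>\<parallel>^2; the sign alignment converts the diagonal coordinates into
  distances via \<parallel>u - u'\<parallel>^2 \<le> 2 (1 - \<langle>u, u'\<rangle>^2).
\<close>

\<comment> \<open>Keep \<open>transpose A *v x\<close> intact; the library simp rule rewrites it to \<open>x v* A\<close>.\<close>
declare transpose_matrix_vector [simp del]

lemma inner_matrix_vector_transpose:
  fixes A :: "real^'n^'m"
  shows "(A *v x) \<bullet> y = x \<bullet> (transpose A *v y)"
  by (metis dot_lmul_matrix inner_commute transpose_matrix_vector)

lemma sum_inner_column_sq: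
  fixes P :: "real^'n^'n"
  assumes "orthogonal_matrix P"
  shows "(\<Sum>i\<in>UNIV. (x \<bullet> column i P)^2) = x \<bullet> x"
proof -
  have "(\<Sum>i\<in>UNIV. (x \<bullet> column i P)^2) = (transpose P *v x) \<bullet> (transpose P *v x)"
    by (simp add: inner_vec_def column_def matrix_vector_mult_def transpose_def
        power2_eq_square mult.commute)
  also have "\<dots> = x \<bullet> x"
    using assms by (simp add: inner_matrix_vector_transpose matrix_vector_mul_assoc orthogonal_matrix_def)
  finally show ?thesis .
qed

lemma inner_columns_orthogonal_matrix:
  fixes P :: "real^'n^'n"
  assumes "orthogonal_matrix P"
  shows "column i P \<bullet> column j P = (if i = j then 1 else 0)"
  using assms unfolding orthogonal_matrix_orthonormal_columns
  by (auto simp: norm_eq_1 orthogonal_def)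

lemma orthogonal_to_columns_imp_zero:
  fixes P :: "real^'n^'n"
  assumes "orthogonal_matrix P" "\<And>j. v \<bullet> column j P = 0"
  shows "v = 0"
  using sum_inner_column_sq[OF assms(1), of v] assms(2) by simp

lemma fro_norm_nonneg: "0 \<le> fro_norm A"
  unfolding fro_norm_def by (intro real_sqrt_ge_zero sum_nonneg) auto

lemma fro_norm_sq: "(fro_norm A)^2 = (\<Sum>i\<in>UNIV. \<Sum>j\<in>UNIV. (A $ i $ j)^2)"
  unfolding fro_norm_def by (simp add: sum_nonneg)

lemma fro_norm_transpose: "fro_norm (transpose A) = fro_norm A"
  unfolding fro_norm_def transpose_def by (subst sum.swap) simp

lemma fro_norm_uminus: "fro_norm (- A) = fro_norm A"
  unfolding fro_norm_def by simp

lemma fro_norm_sq_columns: "(fro_norm A)^2 = (\<Sum>j\<in>UNIV. column j A \<bullet> column j (A::real^'n^'m))"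
  unfolding fro_norm_sq
  by (subst sum.swap) (simp add: inner_vec_def column_def power2_eq_square)

lemma fro_norm_sq_mult_columns:
  fixes A Q :: "real^'n^'n"
  assumes "orthogonal_matrix Q"
  shows "(fro_norm A)^2 = (\<Sum>j\<in>UNIV. (A *v column j Q) \<bullet> (A *v column j Q))"
proof -
  have "(\<Sum>j\<in>UNIV. (A *v column j Q) \<bullet> (A *v column j Q))
      = (\<Sum>j\<in>UNIV. \<Sum>i\<in>UNIV. (A $ i \<bullet> column j Q)^2)"
    by (simp add: matrix_mult_dot inner_vec_def power2_eq_square)
  also have "\<dots> = (\<Sum>i\<in>UNIV. \<Sum>j\<in>UNIV. (A $ i \<bullet> column j Q)^2)"
    by (rule sum.swap)
  also have "\<dots> = (\<Sum>i\<in>UNIV. A $ i \<bullet> A $ i)"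
    by (simp only: sum_inner_column_sq[OF assms])
  also have "\<dots> = (fro_norm A)^2"
    unfolding fro_norm_sq by (simp add: inner_vec_def power2_eq_square)
  finally show ?thesis by simp
qed

lemma fro_norm_sq_orthogonal_coordinates:
  fixes A P Q :: "real^'n^'n"
  assumes "orthogonal_matrix P" "orthogonal_matrix Q"
  shows "(\<Sum>j\<in>UNIV. \<Sum>i\<in>UNIV. (column i P \<bullet> (A *v column j Q))^2) = (fro_norm A)^2"
proof -
  have "\<And>i j. column i P \<bullet> (A *v column j Q) = (A *v column j Q) \<bullet> column i P"
    by (rule inner_commute)
  then show ?thesis
    by (simp only: sum_inner_column_sq[OF assms(1)] fro_norm_sq_mult_columns[OF assms(2)])
qed

lemma norm_mult_vec_le_fro_norm:
  fixes A :: "real^'n^'m"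
  shows "norm (A *v x) \<le> fro_norm A * norm x"
proof -
  have "(norm (A *v x))^2 = (\<Sum>i\<in>UNIV. (A $ i \<bullet> x)^2)"
    unfolding power2_norm_eq_inner by (simp add: matrix_mult_dot inner_vec_def power2_eq_square)
  also have "\<dots> \<le> (\<Sum>i\<in>UNIV. (A $ i \<bullet> A $ i) * (x \<bullet> x))"
    by (intro sum_mono Cauchy_Schwarz_ineq)
  also have "\<dots> = (fro_norm A * norm x)^2"
    by (simp add: fro_norm_sq power_mult_distrib power2_norm_eq_inner sum_distrib_right
        inner_vec_def power2_eq_square[symmetric])
  finally show ?thesis
    using fro_norm_nonneg[of A] by (simp add: power2_le_iff_abs_le)
qed

definition orthonormal_on :: "'i set \<Rightarrow> ('i \<Rightarrow> real^'n) \<Rightarrow> bool" where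
  "orthonormal_on A q \<longleftrightarrow> (\<forall>i\<in>A. \<forall>j\<in>A. q i \<bullet> q j = (if i = j then 1 else 0))"

lemma exists_unit_orthogonal:
  fixes T :: "(real^'n) set"
  assumes "finite T" "card T < CARD('n)"
  shows "\<exists>x. x \<bullet> x = 1 \<and> (\<forall>y\<in>T. x \<bullet> y = 0)"
proof -
  have "dim T < DIM(real^'n)" using dim_le_card'[OF assms(1)] assms(2) by simp
  then obtain x where x: "x \<noteq> 0" "\<And>y. y \<in> span T \<Longrightarrow> orthogonal x y"
    using orthogonal_to_subspace_exists by blast
  have "(x /\<^sub>R norm x) \<bullet> (x /\<^sub>R norm x) = 1"
    using x(1) by (simp add: power2_norm_eq_inner[symmetric] power2_eq_square)
  moreover have "\<forall>y\<in>T. (x /\<^sub>R norm x) \<bullet> y = 0"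
    using x(2) by (auto simp: orthogonal_def span_base)
  ultimately show ?thesis by blast
qed

lemma orthonormal_on_insert:
  assumes "orthonormal_on A q" "b \<notin> A" "x \<bullet> x = 1" "\<forall>a\<in>A. x \<bullet> q a = 0"
  shows "orthonormal_on (insert b A) (q(b := x))"
  using assms unfolding orthonormal_on_def by (auto simp: inner_commute)

lemma orthonormal_on_extend:
  fixes q :: "'n::finite \<Rightarrow> real^'n"
  assumes "orthonormal_on A q"
  shows "\<exists>q'. (\<forall>i\<in>A. q' i = q i) \<and> orthonormal_on UNIV q'"
proof -
  have "\<exists>q'. (\<forall>i\<in>A. q' i = q i) \<and> orthonormal_on (A \<union> C) q'" if "finite C" for C
    using that
  proof (induction C rule: finite_induct)
    case empty
    then show ?case using assms by auto
  next
    case (insert c C)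
    then obtain q' where q': "\<forall>i\<in>A. q' i = q i" "orthonormal_on (A \<union> C) q'" by blast
    show ?case
    proof (cases "c \<in> A \<union> C")
      case True
      then show ?thesis using q' by (auto simp: insert_absorb)
    next
      case False
      have "card (q' ` (A \<union> C)) \<le> card (A \<union> C)" by (rule card_image_le) simp
      also have "\<dots> < CARD('n)" using False by (intro psubset_card_mono) auto
      finally obtain x where "x \<bullet> x = 1" "\<forall>a\<in>A \<union> C. x \<bullet> q' a = 0"
        using exists_unit_orthogonal[of "q' ` (A \<union> C)"] by auto
      then have "orthonormal_on (insert c (A \<union> C)) (q'(c := x))"
        using orthonormal_on_insert[OF q'(2) False] by blast
      moreover have "\<forall>i\<in>A. (q'(c := x)) i = q i" using q'(1) False by simp
      ultimately show ?thesis by (metis Un_insert_right)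
    qed
  qed
  from this[of UNIV] show ?thesis by simp
qed

lemma column_of_columns: "column c ((\<chi> r c. p c $ r)::real^'n^'n) = p c"
  by (simp add: column_def vec_eq_iff)

lemma orthogonal_matrix_of_orthonormal_columns:
  fixes p :: "'n::finite \<Rightarrow> real^'n"
  assumes "orthonormal_on UNIV p"
  shows "orthogonal_matrix ((\<chi> r c. p c $ r)::real^'n^'n)"
  using assms unfolding orthogonal_matrix_orthonormal_columns column_of_columns
  by (auto simp: orthonormal_on_def norm_eq_1 orthogonal_def)

lemma matrix_vector_mult_uminus: "(N::real^'n^'m) *v (- x) = - (N *v x)"
  by (simp add: vec_eq_iff matrix_vector_mult_def sum_negf)

lemma rayleigh_stationary:
  fixes N :: "real^'n^'m"
  assumes max: "\<And>t. (N *v (p + t *\<^sub>R r)) \<bullet> (N *v (p + t *\<^sub>R r)) \<le> \<mu> * ((p + t *\<^sub>R r) \<bullet> (p + t *\<^sub>R r))"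
    and "p \<bullet> p = 1" "p \<bullet> r = 0" "\<mu> = (N *v p) \<bullet> (N *v p)"
    and "(N *v p) \<bullet> (N *v r) = r \<bullet> r"
  shows "r = 0"
proof -
  define R where "R = r \<bullet> r"
  define K where "K = (N *v r) \<bullet> (N *v r)"
  have ineq: "2 * t * R + t^2 * K \<le> \<mu> * t^2 * R" for t
  proof -
    have "(N *v (p + t *\<^sub>R r)) \<bullet> (N *v (p + t *\<^sub>R r)) = \<mu> + 2 * t * R + t^2 * K"
      using assms(4-) by (simp add: matrix_vector_right_distrib matrix_vector_mult_scaleR
          inner_add_left inner_add_right inner_commute R_def K_def power2_eq_square algebra_simps)
    moreover have "(p + t *\<^sub>R r) \<bullet> (p + t *\<^sub>R r) = 1 + t^2 * R"
      using assms(2,3) by (simp add: inner_add_left inner_add_right inner_commute R_def power2_eq_square)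
    ultimately show ?thesis using max[of t] by (simp add: algebra_simps)
  qed
  \<comment> \<open>At t = R / D the linear term 2 t R dominates, which forces R = 0.\<close>
  define D where "D = \<bar>\<mu> * R\<bar> + \<bar>K\<bar> + 1"
  have D: "D > 0" by (simp add: D_def)
  define t where "t = R / D"
  have "2 * t * R \<le> t^2 * (\<mu> * R - K)" using ineq[of t] by (simp add: algebra_simps)
  also have "\<dots> \<le> t^2 * D" by (intro mult_left_mono) (auto simp: D_def)
  also have "\<dots> = t * R" using D by (simp add: t_def power2_eq_square)
  finally have "t * R \<le> 0" by (simp add: mult.commute)
  then have "R * R \<le> 0" using D by (simp add: t_def divide_le_0_iff)
  then have "R = 0" using inner_ge_zero[of r] by (simp add: R_def mult_le_0_iff)
  then show ?thesis by (simp add: R_def)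
qed

definition gram_form :: "real^'n^'m \<Rightarrow> real^'m \<Rightarrow> real" where
  "gram_form M y = (transpose M *v y) \<bullet> (transpose M *v y)"

lemma rayleigh_maximizer_eigenvector:
  fixes M :: "real^'n^'n"
  assumes eig: "\<And>w. w \<in> W \<Longrightarrow> \<exists>c. M *v (transpose M *v w) = c *\<^sub>R w"
    and x: "x \<bullet> x = 1" "\<forall>w\<in>W. x \<bullet> w = 0"
    and max: "\<And>y. \<forall>w\<in>W. y \<bullet> w = 0 \<Longrightarrow> gram_form M y \<le> gram_form M x * (y \<bullet> y)"
  shows "M *v (transpose M *v x) = gram_form M x *\<^sub>R x"
proof -
  have adj: "(transpose M *v y) \<bullet> z = y \<bullet> (M *v z)" for y z
    using inner_matrix_vector_transpose[of "transpose M" y z] by simp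
  define r where "r = M *v (transpose M *v x) - gram_form M x *\<^sub>R x"
  have r_W: "r \<bullet> w = 0" if w: "w \<in> W" for w
  proof -
    obtain c where "M *v (transpose M *v w) = c *\<^sub>R w" using eig[OF w] by blast
    then have "(M *v (transpose M *v x)) \<bullet> w = 0"
      using x(2) w by (simp add: inner_matrix_vector_transpose adj)
    then show ?thesis using x(2) w by (simp add: r_def inner_diff_left)
  qed
  have r_x: "x \<bullet> r = 0"
    using x(1) by (simp add: r_def inner_diff_right gram_form_def adj[symmetric] inner_commute)
  have "r = 0"
  proof (rule rayleigh_stationary[where N = "transpose M" and p = x and \<mu> = "gram_form M x"])
    show "(transpose M *v (x + t *\<^sub>R r)) \<bullet> (transpose M *v (x + t *\<^sub>R r))
        \<le> gram_form M x * ((x + t *\<^sub>R r) \<bullet> (x + t *\<^sub>R r))" for t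
      using max[of "x + t *\<^sub>R r"] x(2) r_W by (simp add: gram_form_def inner_add_left)
    have "(transpose M *v x) \<bullet> (transpose M *v r) = r \<bullet> (M *v (transpose M *v x))"
      by (subst inner_commute) (rule adj)
    also have "\<dots> = r \<bullet> (r + gram_form M x *\<^sub>R x)" by (simp add: r_def)
    finally show "(transpose M *v x) \<bullet> (transpose M *v r) = r \<bullet> r"
      using r_x by (simp add: inner_add_right inner_commute)
  qed (use x(1) r_x in \<open>simp_all add: gram_form_def\<close>)
  then show ?thesis by (simp add: r_def)
qed

lemma exists_rayleigh_maximizer:
  fixes M :: "real^'n^'n"
  assumes "finite W" "card W < CARD('n)"
  shows "\<exists>x. x \<bullet> x = 1 \<and> (\<forall>w\<in>W. x \<bullet> w = 0) \<and> 0 \<le> v \<bullet> x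
           \<and> (\<forall>y. (\<forall>w\<in>W. y \<bullet> w = 0) \<longrightarrow> gram_form M y \<le> gram_form M x * (y \<bullet> y))"
proof -
  define C where "C = sphere 0 1 \<inter> (\<Inter>w\<in>W. {y. w \<bullet> y = 0})"
  have "compact C" unfolding C_def
    by (intro compact_Int_closed compact_sphere closed_INT ballI closed_hyperplane)
  moreover have "C \<noteq> {}"
    using exists_unit_orthogonal[OF assms]
    by (auto simp: C_def norm_eq_1 inner_commute)
  moreover have "continuous_on C (gram_form M)" unfolding gram_form_def by (intro continuous_intros)
  ultimately obtain x0 where x0: "x0 \<in> C" "\<And>y. y \<in> C \<Longrightarrow> gram_form M y \<le> gram_form M x0"
    using continuous_attains_sup[of C "gram_form M"] by auto
  \<comment> \<open>The Gram form is even, so the sign of the maximizer is free.\<close>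
  define x where "x = (if 0 \<le> v \<bullet> x0 then x0 else - x0)"
  have fx: "gram_form M x = gram_form M x0" by (simp add: x_def gram_form_def matrix_vector_mult_uminus)
  have x: "x \<bullet> x = 1" "\<forall>w\<in>W. x \<bullet> w = 0"
    using x0(1) by (auto simp: x_def C_def norm_eq_1 inner_commute)
  have "gram_form M y \<le> gram_form M x * (y \<bullet> y)" if y: "\<forall>w\<in>W. y \<bullet> w = 0" for y
  proof (cases "y = 0")
    case True
    then show ?thesis by (simp add: gram_form_def)
  next
    case False
    have "y /\<^sub>R norm y \<in> C" using False y by (auto simp: C_def inner_commute)
    then have "gram_form M (y /\<^sub>R norm y) \<le> gram_form M x" using x0(2) fx by simp
    moreover have "gram_form M (y /\<^sub>R norm y) = gram_form M y / (y \<bullet> y)"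
      by (simp add: gram_form_def matrix_vector_mult_scaleR power2_norm_eq_inner[symmetric]
          power2_eq_square field_simps)
    ultimately show ?thesis using False by (simp add: divide_le_eq)
  qed
  moreover have "0 \<le> v \<bullet> x" by (simp add: x_def)
  ultimately show ?thesis using x by blast
qed

definition greedy_eigenbasis_on ::
    "real^'k::{finite,linorder}^'k::{finite,linorder} \<Rightarrow> ('k::{finite,linorder} \<Rightarrow> real^'k::{finite,linorder})
      \<Rightarrow> 'k::{finite,linorder} set \<Rightarrow> ('k::{finite,linorder} \<Rightarrow> real^'k::{finite,linorder}) \<Rightarrow> bool"
  where
  "greedy_eigenbasis_on M u A p \<longleftrightarrow> orthonormal_on A p
     \<and> (\<forall>a\<in>A. M *v (transpose M *v p a) = gram_form M (p a) *\<^sub>R p a)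
     \<and> (\<forall>a\<in>A. 0 \<le> u a \<bullet> p a)
     \<and> (\<forall>a\<in>A. \<forall>y. (\<forall>a'\<in>A. a' < a \<longrightarrow> y \<bullet> p a' = 0)
          \<longrightarrow> gram_form M y \<le> gram_form M (p a) * (y \<bullet> y))"

lemma greedy_eigenbasis_on_insert:
  fixes M :: "real^'k::{finite,linorder}^'k::{finite,linorder}"
  assumes "greedy_eigenbasis_on M u A p" "finite A" "\<forall>a\<in>A. a < b"
  shows "\<exists>p'. greedy_eigenbasis_on M u (insert b A) p'"
proof -
  from assms(1) have p_on: "orthonormal_on A p"
    and p_eig: "\<forall>a\<in>A. M *v (transpose M *v p a) = gram_form M (p a) *\<^sub>R p a"
    and p_sign: "\<forall>a\<in>A. 0 \<le> u a \<bullet> p a"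
    and p_max: "\<And>a y. a \<in> A \<Longrightarrow> \<forall>a'\<in>A. a' < a \<longrightarrow> y \<bullet> p a' = 0 \<Longrightarrow> gram_form M y \<le> gram_form M (p a) * (y \<bullet> y)"
    unfolding greedy_eigenbasis_on_def by blast+
  have before_b: "\<And>a. a \<in> A \<Longrightarrow> a < b" using assms(3) by blast
  then have bA: "b \<notin> A" by auto
  have "card (p ` A) < CARD('k)"
    using card_image_le[OF assms(2), of p] card_mono[of "UNIV :: 'k set" "insert b A"]
      card_insert_disjoint[OF assms(2) bA] by simp
  then obtain x where x: "x \<bullet> x = 1" "\<forall>a\<in>A. x \<bullet> p a = 0" "0 \<le> u b \<bullet> x"
    and x_max: "\<And>y. \<forall>a\<in>A. y \<bullet> p a = 0 \<Longrightarrow> gram_form M y \<le> gram_form M x * (y \<bullet> y)"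
    using exists_rayleigh_maximizer[where W = "p ` A" and M = M and v = "u b"] assms(2) by auto
  have eig_x: "M *v (transpose M *v x) = gram_form M x *\<^sub>R x"
  proof (rule rayleigh_maximizer_eigenvector[where W = "p ` A"])
    show "\<exists>c. M *v (transpose M *v w) = c *\<^sub>R w" if "w \<in> p ` A" for w
      using p_eig that by blast
    show "\<forall>w\<in>p ` A. x \<bullet> w = 0" using x(2) by blast
    show "gram_form M y \<le> gram_form M x * (y \<bullet> y)" if "\<forall>w\<in>p ` A. y \<bullet> w = 0" for y
      using that x_max by blast
  qed (rule x(1))
  define p' where "p' = p(b := x)"
  have "orthonormal_on (insert b A) p'"
    unfolding p'_def using p_on x bA by (intro orthonormal_on_insert) auto
  moreover have "\<forall>a\<in>insert b A. M *v (transpose M *v p' a) = gram_form M (p' a) *\<^sub>R p' a"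
    using p_eig eig_x by (auto simp: p'_def)
  moreover have "\<forall>a\<in>insert b A. 0 \<le> u a \<bullet> p' a"
    using p_sign x bA by (auto simp: p'_def)
  moreover have "gram_form M y \<le> gram_form M (p' a) * (y \<bullet> y)"
    if a: "a \<in> insert b A" and y: "\<forall>a'\<in>insert b A. a' < a \<longrightarrow> y \<bullet> p' a' = 0" for a y
  proof -
    have "\<forall>a'\<in>A. p' a' = p a'" using bA by (auto simp: p'_def)
    then have y_A: "\<forall>a'\<in>A. a' < a \<longrightarrow> y \<bullet> p a' = 0" using y by auto
    show ?thesis
    proof (cases "a = b")
      case True
      then show ?thesis using x_max y_A before_b by (simp add: p'_def)
    next
      case False
      then show ?thesis using p_max y_A a by (simp add: p'_def)
    qed
  qed
  ultimately have "greedy_eigenbasis_on M u (insert b A) p'"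
    unfolding greedy_eigenbasis_on_def by blast
  then show ?thesis by blast
qed

lemma exists_ordered_eigenbasis:
  fixes M :: "real^'k::{finite,linorder}^'k::{finite,linorder}"
    and u :: "'k::{finite,linorder} \<Rightarrow> real^'k::{finite,linorder}"
  shows "\<exists>p. orthonormal_on UNIV p \<and> (\<forall>i. M *v (transpose M *v p i) = gram_form M (p i) *\<^sub>R p i)
           \<and> (\<forall>i j. i \<le> j \<longrightarrow> gram_form M (p j) \<le> gram_form M (p i)) \<and> (\<forall>i. 0 \<le> u i \<bullet> p i)"
proof -
  have "\<exists>p. greedy_eigenbasis_on M u A p" if "finite A" for A
    using that
  proof (induction A rule: finite_linorder_max_induct)
    case empty
    show ?case by (simp add: greedy_eigenbasis_on_def orthonormal_on_def)
  next
    case (insert b A)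
    then show ?case using greedy_eigenbasis_on_insert by blast
  qed
  from this[OF finite] obtain p where "greedy_eigenbasis_on M u UNIV p" by blast
  then have p_on: "orthonormal_on UNIV p"
    and p_eig: "\<forall>i. M *v (transpose M *v p i) = gram_form M (p i) *\<^sub>R p i"
    and p_sign: "\<forall>i. 0 \<le> u i \<bullet> p i"
    and p_max: "\<And>a y. \<forall>a'. a' < a \<longrightarrow> y \<bullet> p a' = 0 \<Longrightarrow> gram_form M y \<le> gram_form M (p a) * (y \<bullet> y)"
    unfolding greedy_eigenbasis_on_def by simp_all
  have "gram_form M (p j) \<le> gram_form M (p i)" if "i \<le> j" for i j
  proof -
    have "\<forall>a'. a' < i \<longrightarrow> p j \<bullet> p a' = 0"
      using p_on \<open>i \<le> j\<close> unfolding orthonormal_on_def by auto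
    then have "gram_form M (p j) \<le> gram_form M (p i) * (p j \<bullet> p j)" by (rule p_max)
    then show ?thesis using p_on by (simp add: orthonormal_on_def)
  qed
  then show ?thesis using p_on p_eig p_sign by blast
qed

lemma column_matrix_mult: "column j (A ** B) = A *v column j (B::real^'n^'m)"
  by (simp add: vec_eq_iff column_def matrix_matrix_mult_def matrix_vector_mult_def)

lemma column_mult_diag_mat: "column j (P ** diag_mat s) = s j *\<^sub>R column j P"
proof -
  have "(\<Sum>k\<in>UNIV. P $ i $ k * (if k = j then s k else 0)) = P $ i $ j * s j" for i
    by (simp add: if_distrib[where f="\<lambda>x. P $ i $ _ * x"] cong: if_cong)
  then show ?thesis
    by (simp add: vec_eq_iff column_def matrix_matrix_mult_def diag_mat_def mult.commute)
qed

lemma transpose_diag_mat: "transpose (diag_mat s) = diag_mat s"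
  by (simp add: vec_eq_iff transpose_def diag_mat_def)

lemma svd_column_relations:
  fixes A U V :: "real^'n^'n"
  assumes "is_svd A U s V"
  shows "A *v column i V = s i *\<^sub>R column i U"
    and "transpose A *v column i U = s i *\<^sub>R column i V"
proof -
  have U: "orthogonal_matrix U" and V: "orthogonal_matrix V"
    and A: "A = U ** diag_mat s ** transpose V"
    using assms by (auto simp: is_svd_def)
  have "A ** V = U ** diag_mat s ** (transpose V ** V)" by (simp add: A matrix_mul_assoc)
  also have "\<dots> = U ** diag_mat s" using V by (simp add: orthogonal_matrix)
  finally show "A *v column i V = s i *\<^sub>R column i U"
    by (metis column_matrix_mult column_mult_diag_mat)
  have "transpose A ** U = V ** diag_mat s ** (transpose U ** U)"
    by (simp add: A matrix_transpose_mul transpose_diag_mat matrix_mul_assoc)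
  also have "\<dots> = V ** diag_mat s" using U by (simp add: orthogonal_matrix)
  finally show "transpose A *v column i U = s i *\<^sub>R column i V"
    by (metis column_matrix_mult column_mult_diag_mat)
qed

lemma matrix_eqI_columns: "(\<And>j. column j A = column j B) \<Longrightarrow> A = (B::'a^'n^'m)"
  by (simp add: vec_eq_iff column_def)

lemma is_svd_of_column_relations:
  fixes M P Q :: "real^'n^'n"
  assumes "orthogonal_matrix P" "orthogonal_matrix Q" "\<forall>i. 0 \<le> s i"
    and "\<And>i. M *v column i Q = s i *\<^sub>R column i P"
  shows "is_svd M P s Q"
proof -
  have "M ** Q = P ** diag_mat s"
  proof (rule matrix_eqI_columns)
    show "column j (M ** Q) = column j (P ** diag_mat s)" for j
      unfolding column_mult_diag_mat unfolding column_matrix_mult by (rule assms(4))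
  qed
  then have "M = P ** diag_mat s ** transpose Q"
    using assms(2) by (metis matrix_mul_assoc matrix_mul_rid orthogonal_matrix_def)
  then show ?thesis using assms(1-3) by (simp add: is_svd_def)
qed

lemma exists_right_singular_vectors:
  fixes M :: "real^'n::finite^'n" and p :: "'n \<Rightarrow> real^'n"
  assumes p_on: "orthonormal_on UNIV p"
    and p_eig: "\<And>i. M *v (transpose M *v p i) = gram_form M (p i) *\<^sub>R p i"
  shows "\<exists>q. orthonormal_on UNIV q \<and> (\<forall>i. transpose M *v p i = norm (transpose M *v p i) *\<^sub>R q i)"
proof -
  define s where "s i = norm (transpose M *v p i)" for i
  have images: "(transpose M *v p i) \<bullet> (transpose M *v p j) = (if i = j then (s i)^2 else 0)" for i j
  proof -
    have "(transpose M *v p i) \<bullet> (transpose M *v p j) = p i \<bullet> (M *v (transpose M *v p j))"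
      using inner_matrix_vector_transpose[of "transpose M"] by simp
    also have "\<dots> = (s j)^2 * (p i \<bullet> p j)"
      by (subst p_eig) (simp add: s_def gram_form_def power2_norm_eq_inner)
    finally show ?thesis using p_on by (simp add: orthonormal_on_def)
  qed
  \<comment> \<open>Normalise the images where s i > 0 and complete them to an orthonormal basis.\<close>
  define A where "A = {i. s i \<noteq> 0}"
  have "orthonormal_on A (\<lambda>i. (transpose M *v p i) /\<^sub>R s i)"
    unfolding orthonormal_on_def A_def by (simp add: images power2_eq_square field_simps)
  then obtain q where q_A: "\<And>i. i \<in> A \<Longrightarrow> q i = (transpose M *v p i) /\<^sub>R s i"
    and q_on: "orthonormal_on UNIV q"
    using orthonormal_on_extend by blast
  have "transpose M *v p i = s i *\<^sub>R q i" for i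
    using q_A[of i] by (cases "i \<in> A") (auto simp: A_def s_def)
  then show ?thesis using q_on unfolding s_def by blast
qed

lemma exists_svd_aligned:
  fixes M :: "real^'k::{finite,linorder}^'k::{finite,linorder}"
    and u :: "'k::{finite,linorder} \<Rightarrow> real^'k::{finite,linorder}"
  shows "\<exists>P s Q. is_svd M P s Q \<and> weak_decr s \<and> (\<forall>i. 0 \<le> u i \<bullet> column i P)"
proof -
  obtain p where p_on: "orthonormal_on UNIV p"
    and p_eig: "\<And>i. M *v (transpose M *v p i) = gram_form M (p i) *\<^sub>R p i"
    and p_ord: "\<And>i j. i \<le> j \<Longrightarrow> gram_form M (p j) \<le> gram_form M (p i)"
    and p_sign: "\<And>i. 0 \<le> u i \<bullet> p i"
    using exists_ordered_eigenbasis[of M u] by blast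
  define s where "s i = norm (transpose M *v p i)" for i
  obtain q where q_on: "orthonormal_on UNIV q" and Mt_p: "\<And>i. transpose M *v p i = s i *\<^sub>R q i"
    using exists_right_singular_vectors[OF p_on p_eig] unfolding s_def by blast
  define P where "P = ((\<chi> r c. p c $ r)::real^'k::{finite,linorder}^'k::{finite,linorder})"
  define Q where "Q = ((\<chi> r c. q c $ r)::real^'k::{finite,linorder}^'k::{finite,linorder})"
  have P: "orthogonal_matrix P" "\<And>i. column i P = p i"
    unfolding P_def using p_on by (auto intro: orthogonal_matrix_of_orthonormal_columns column_of_columns)
  have Q: "orthogonal_matrix Q" "\<And>i. column i Q = q i"
    unfolding Q_def using q_on by (auto intro: orthogonal_matrix_of_orthonormal_columns column_of_columns)
  have M_q: "M *v q i = s i *\<^sub>R p i" for i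
  proof -
    have "(M *v q i) \<bullet> p j = s j * (q i \<bullet> q j)" for j
      by (simp add: inner_matrix_vector_transpose Mt_p)
    then have "(M *v q i - s i *\<^sub>R p i) \<bullet> column j P = 0" for j
      using p_on q_on by (simp add: P(2) inner_diff_left orthonormal_on_def)
    then show ?thesis using orthogonal_to_columns_imp_zero[OF P(1)] by fastforce
  qed
  have "is_svd M P s Q"
    by (rule is_svd_of_column_relations) (auto simp: P Q M_q s_def)
  moreover have "weak_decr s"
    unfolding weak_decr_def s_def using p_ord
    by (auto simp: gram_form_def power2_norm_eq_inner[symmetric] intro: power2_le_imp_le)
  moreover have "\<forall>i. 0 \<le> u i \<bullet> column i P" using p_sign by (simp add: P(2))
  ultimately show ?thesis by blast
qed

lemma transpose_add: "transpose (A + B) = transpose A + transpose (B::'a::semiring_1^'n^'m)"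
  by (simp add: transpose_def vec_eq_iff)

lemma svd_norm_transpose_mult_sq:
  fixes N P Q :: "real^'n^'n"
  assumes "is_svd N P s Q"
  shows "(transpose N *v x) \<bullet> (transpose N *v x) = (\<Sum>i\<in>UNIV. (s i)^2 * (x \<bullet> column i P)^2)"
proof -
  have Q: "orthogonal_matrix Q" using assms by (simp add: is_svd_def)
  have "(transpose N *v x) \<bullet> column i Q = s i * (x \<bullet> column i P)" for i
    using inner_matrix_vector_transpose[of "transpose N" x "column i Q"]
    by (simp add: svd_column_relations(1)[OF assms])
  then show ?thesis
    using sum_inner_column_sq[OF Q, of "transpose N *v x"] by (simp add: power_mult_distrib)
qed

lemma svd_norm_transpose_mult_ge:
  fixes N P Q :: "real^'k::{finite,linorder}^'k::{finite,linorder}"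
  assumes svd: "is_svd N P s Q" and "weak_decr s"
    and x: "x \<bullet> x = 1" "\<And>i. j < i \<Longrightarrow> x \<bullet> column i P = 0"
  shows "s j \<le> norm (transpose N *v x)"
proof -
  have "(s j)^2 = (\<Sum>i\<in>UNIV. (s j)^2 * (x \<bullet> column i P)^2)"
    using sum_inner_column_sq[of P x] svd x(1) by (simp add: is_svd_def sum_distrib_left[symmetric])
  also have "\<dots> \<le> (\<Sum>i\<in>UNIV. (s i)^2 * (x \<bullet> column i P)^2)"
  proof (rule sum_mono)
    fix i
    show "(s j)^2 * (x \<bullet> column i P)^2 \<le> (s i)^2 * (x \<bullet> column i P)^2"
    proof (cases "i \<le> j")
      case True
      then have "(s j)^2 \<le> (s i)^2"
        using assms(2) svd by (intro power_mono) (auto simp: weak_decr_def is_svd_def)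
      then show ?thesis by (intro mult_right_mono) auto
    qed (simp add: x(2))
  qed
  also have "\<dots> = (norm (transpose N *v x))^2"
    by (simp add: svd_norm_transpose_mult_sq[OF svd] power2_norm_eq_inner)
  finally show ?thesis by (rule power2_le_imp_le) simp
qed

lemma svd_norm_transpose_mult_le:
  fixes N P Q :: "real^'k::{finite,linorder}^'k::{finite,linorder}"
  assumes svd: "is_svd N P s Q" and "weak_decr s"
    and x: "x \<bullet> x = 1" "\<And>i. i < j \<Longrightarrow> x \<bullet> column i P = 0"
  shows "norm (transpose N *v x) \<le> s j"
proof -
  have "(norm (transpose N *v x))^2 = (\<Sum>i\<in>UNIV. (s i)^2 * (x \<bullet> column i P)^2)"
    by (simp add: svd_norm_transpose_mult_sq[OF svd] power2_norm_eq_inner)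
  also have "\<dots> \<le> (\<Sum>i\<in>UNIV. (s j)^2 * (x \<bullet> column i P)^2)"
  proof (rule sum_mono)
    fix i
    show "(s i)^2 * (x \<bullet> column i P)^2 \<le> (s j)^2 * (x \<bullet> column i P)^2"
    proof (cases "j \<le> i")
      case True
      then have "(s i)^2 \<le> (s j)^2"
        using assms(2) svd by (intro power_mono) (auto simp: weak_decr_def is_svd_def)
      then show ?thesis by (intro mult_right_mono) auto
    qed (simp add: x(2))
  qed
  also have "\<dots> = (s j)^2"
    using sum_inner_column_sq[of P x] svd x(1) by (simp add: is_svd_def sum_distrib_left[symmetric])
  finally have "(norm (transpose N *v x))^2 \<le> (s j)^2" .
  moreover have "0 \<le> s j" using svd by (simp add: is_svd_def)
  ultimately show ?thesis by (rule power2_le_imp_le)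
qed

lemma weyl_singular_value_upper:
  fixes N E P1 Q1 P2 Q2 :: "real^'k::{finite,linorder}^'k::{finite,linorder}"
  assumes svd1: "is_svd N P1 s1 Q1" "weak_decr s1"
    and svd2: "is_svd (N + E) P2 s2 Q2" "weak_decr s2"
  shows "s2 j \<le> s1 j + fro_norm E"
proof -
  \<comment> \<open>A common test vector for the min-max characterisations of s2 j and s1 j.\<close>
  define T where "T = (\<lambda>i. column i P2) ` {i. j < i} \<union> (\<lambda>i. column i P1) ` {i. i < j}"
  have "card T \<le> card {i. j < i} + card {i. i < j}"
    unfolding T_def by (rule order.trans[OF card_Un_le add_mono]) (auto intro: card_image_le)
  also have "\<dots> = card ({i. j < i} \<union> {i. i < j})" by (rule card_Un_disjoint[symmetric]) auto
  also have "\<dots> < CARD('k)"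
    by (rule psubset_card_mono) auto
  finally obtain x where x: "x \<bullet> x = 1" "\<forall>y\<in>T. x \<bullet> y = 0"
    using exists_unit_orthogonal[of T] unfolding T_def by auto
  have "s2 j \<le> norm (transpose (N + E) *v x)"
    using x by (intro svd_norm_transpose_mult_ge[OF svd2]) (auto simp: T_def)
  also have "\<dots> \<le> norm (transpose N *v x) + norm (transpose E *v x)"
    by (simp add: transpose_add matrix_vector_mult_add_rdistrib norm_triangle_ineq)
  also have "norm (transpose N *v x) \<le> s1 j"
    using x by (intro svd_norm_transpose_mult_le[OF svd1]) (auto simp: T_def)
  also have "norm (transpose E *v x) \<le> fro_norm E"
    using norm_mult_vec_le_fro_norm[of "transpose E" x] x(1)
    by (simp add: fro_norm_transpose norm_eq_1[symmetric])
  finally show ?thesis by simp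
qed

lemma weyl_singular_values:
  fixes B \<Delta> U V P Q :: "real^'k::{finite,linorder}^'k::{finite,linorder}"
  assumes "is_svd B U \<sigma> V" "weak_decr \<sigma>" "is_svd (B + \<Delta>) P s Q" "weak_decr s"
  shows "\<bar>s j - \<sigma> j\<bar> \<le> fro_norm \<Delta>"
proof -
  have "s j \<le> \<sigma> j + fro_norm \<Delta>" using weyl_singular_value_upper assms by blast
  moreover have "\<sigma> j \<le> s j + fro_norm (- \<Delta>)"
    using weyl_singular_value_upper[of "B + \<Delta>" P s Q "- \<Delta>" U \<sigma> V] assms by simp
  ultimately show ?thesis by (simp add: fro_norm_uminus)
qed

lemma sv_gap_le:
  fixes s :: "'k::finite \<Rightarrow> real"
  assumes "i \<noteq> j"
  shows "sv_gap s \<le> \<bar>s i - s j\<bar>"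
proof -
  have "finite {\<bar>s i - s j\<bar> | i j. i \<noteq> j}"
    by (rule finite_subset[of _ "(\<lambda>(i, j). \<bar>s i - s j\<bar>) ` UNIV"]) auto
  then show ?thesis unfolding sv_gap_def using assms by (intro Min_le) auto
qed

lemma sv_gap_pos:
  fixes s :: "'k::finite \<Rightarrow> real"
  assumes "inj s" "2 \<le> CARD('k)"
  shows "0 < sv_gap s"
proof -
  define G where "G = {\<bar>s i - s j\<bar> | i j. i \<noteq> j}"
  have "finite G"
    unfolding G_def by (rule finite_subset[of _ "(\<lambda>(i, j). \<bar>s i - s j\<bar>) ` UNIV"]) auto
  moreover have "G \<noteq> {}"
    using assms(2) card_le_Suc0_iff_eq[of "UNIV :: 'k set"] by (auto simp: G_def)
  ultimately have "sv_gap s \<in> G" unfolding sv_gap_def G_def[symmetric] by (rule Min_in)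
  then show ?thesis using assms(1) by (auto simp: G_def inj_eq)
qed

lemma strict_decr_imp_inj: "strict_decr s \<Longrightarrow> inj s"
  unfolding strict_decr_def inj_def by (metis linorder_neq_iff order.irrefl)

lemma strict_decr_imp_weak_decr: "strict_decr s \<Longrightarrow> weak_decr s"
  unfolding strict_decr_def weak_decr_def by (metis order.order_iff_strict order.refl)

lemma fro_norm_sq_svd:
  assumes "is_svd B U \<sigma> V"
  shows "(fro_norm B)^2 = (\<Sum>j\<in>UNIV. (\<sigma> j)^2)"
proof -
  have U: "orthogonal_matrix U" and V: "orthogonal_matrix V" using assms by (auto simp: is_svd_def)
  have "(fro_norm B)^2 = (\<Sum>j\<in>UNIV. (B *v column j V) \<bullet> (B *v column j V))"
    by (rule fro_norm_sq_mult_columns[OF V])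
  also have "\<dots> = (\<Sum>j\<in>UNIV. (\<sigma> j)^2)"
    by (simp add: svd_column_relations(1)[OF assms] inner_columns_orthogonal_matrix[OF U]
        power2_eq_square)
  finally show ?thesis .
qed

lemma singular_value_le_fro_norm:
  assumes "is_svd B U \<sigma> V"
  shows "\<sigma> i \<le> fro_norm B"
proof (rule power2_le_imp_le)
  show "(\<sigma> i)^2 \<le> (fro_norm B)^2"
    unfolding fro_norm_sq_svd[OF assms] by (rule member_le_sum) auto
qed (rule fro_norm_nonneg)

lemma sv_gap_le_fro_norm:
  fixes B U V :: "real^'k::finite^'k"
  assumes "is_svd B U \<sigma> V" "2 \<le> CARD('k)"
  shows "sv_gap \<sigma> \<le> fro_norm B"
proof -
  obtain i j :: 'k where "i \<noteq> j"
    using assms(2) card_le_Suc0_iff_eq[of "UNIV :: 'k set"] by auto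
  then have "sv_gap \<sigma> \<le> \<bar>\<sigma> i - \<sigma> j\<bar>" by (rule sv_gap_le)
  moreover have "0 \<le> \<sigma> i" "0 \<le> \<sigma> j" using assms(1) by (auto simp: is_svd_def)
  ultimately show ?thesis
    using singular_value_le_fro_norm[OF assms(1), of i] singular_value_le_fro_norm[OF assms(1), of j]
    by linarith
qed

lemma perturbation_threshold_le_quarter_gap:
  fixes \<alpha> b k :: real
  assumes "0 < \<alpha>" "\<alpha> \<le> b" "1 \<le> k"
  shows "\<alpha>^2 / (sqrt 2 * (2 * b * (1 + sqrt (1 - 1 / k))
           + sqrt (\<alpha>^2 + 4 * b^2 * (1 + sqrt (1 - 1 / k))^2))) \<le> \<alpha> / 4"
proof -
  define c where "c = sqrt (1 - 1 / k)"
  define X where "X = 2 * b * (1 + c)"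
  have "0 \<le> b * c" using assms(1-3) by (simp add: c_def)
  moreover have "X = 2 * b + 2 * (b * c)" by (simp add: X_def algebra_simps)
  ultimately have "2 * \<alpha> \<le> X" using assms(2) by linarith
  moreover have "X \<le> sqrt (\<alpha>^2 + 4 * b^2 * (1 + c)^2)"
    by (rule real_le_rsqrt) (simp add: X_def power_mult_distrib)
  ultimately have "4 * \<alpha> \<le> 1 * (X + sqrt (\<alpha>^2 + 4 * b^2 * (1 + c)^2))" by simp
  also have "\<dots> \<le> sqrt 2 * (X + sqrt (\<alpha>^2 + 4 * b^2 * (1 + c)^2))"
    using \<open>2 * \<alpha> \<le> X\<close> assms(1) by (intro mult_right_mono) auto
  finally have "\<alpha>^2 / (sqrt 2 * (X + sqrt (\<alpha>^2 + 4 * b^2 * (1 + c)^2))) \<le> \<alpha>^2 / (4 * \<alpha>)"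
    using assms(1) by (intro divide_left_mono) auto
  also have "\<dots> = \<alpha> / 4" using assms(1) by (simp add: power2_eq_square)
  finally show ?thesis by (simp add: X_def c_def)
qed

lemma gap_bound_cross_equations:
  fixes s \<sigma> g x y a b :: real
  assumes "0 \<le> s" "0 \<le> \<sigma>" "0 < g" "g \<le> \<bar>s - \<sigma>\<bar>"
    and "s * x - \<sigma> * y = a" "s * y - \<sigma> * x = b"
  shows "g^2 * x^2 \<le> a^2 + b^2"
proof -
  \<comment> \<open>Adding and subtracting the equations decouples them; both s - \<sigma> and s + \<sigma> are at least g.\<close>
  have "\<bar>s - \<sigma>\<bar> * \<bar>x + y\<bar> = \<bar>a + b\<bar>" "\<bar>s + \<sigma>\<bar> * \<bar>x - y\<bar> = \<bar>a - b\<bar>"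
    using assms(5,6) by (simp_all add: abs_mult[symmetric] algebra_simps)
  moreover have "g * \<bar>x + y\<bar> \<le> \<bar>s - \<sigma>\<bar> * \<bar>x + y\<bar>"
    using assms(4) by (rule mult_right_mono) simp
  moreover have "g * \<bar>x - y\<bar> \<le> \<bar>s + \<sigma>\<bar> * \<bar>x - y\<bar>"
    using assms(1,2,4) by (intro mult_right_mono) auto
  moreover have "g * (2 * \<bar>x\<bar>) \<le> g * (\<bar>x + y\<bar> + \<bar>x - y\<bar>)"
    using assms(3) by (intro mult_left_mono) auto
  ultimately have "2 * g * \<bar>x\<bar> \<le> \<bar>a + b\<bar> + \<bar>a - b\<bar>" by (simp add: algebra_simps)
  then have "(2 * g * \<bar>x\<bar>)^2 \<le> (\<bar>a + b\<bar> + \<bar>a - b\<bar>)^2"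
    using assms(3) by (intro power_mono) auto
  also have "\<dots> \<le> 2 * ((a + b)^2 + (a - b)^2)"
    using sum_squares_bound[of "\<bar>a + b\<bar>" "\<bar>a - b\<bar>"] by (simp add: power2_sum)
  also have "\<dots> = 4 * (a^2 + b^2)" by (simp add: power2_eq_square algebra_simps)
  finally show ?thesis by (simp add: power_mult_distrib)
qed

lemma unit_vectors_dist_sq_le:
  fixes u p :: "'a::real_inner"
  assumes "u \<bullet> u = 1" "p \<bullet> p = 1" "0 \<le> u \<bullet> p"
  shows "(u - p) \<bullet> (u - p) \<le> 2 * (1 - (u \<bullet> p)^2)"
proof -
  have "(u \<bullet> p)^2 \<le> 1^2" using Cauchy_Schwarz_ineq[of u p] assms(1,2) by simp
  then have "u \<bullet> p \<le> 1" by (rule power2_le_imp_le) simp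
  then have "(u \<bullet> p)^2 \<le> u \<bullet> p"
    using assms(3) mult_left_le_one_le by (simp add: power2_eq_square)
  then show ?thesis
    using assms(1,2) by (simp add: inner_diff_left inner_diff_right inner_commute)
qed

lemma svd_perturbation_cross_relations:
  fixes B \<Delta> U V P Q :: "real^'n^'n"
  assumes B: "is_svd B U \<sigma> V" and B\<Delta>: "is_svd (B + \<Delta>) P s Q"
  shows "s j * (column i U \<bullet> column j P) - \<sigma> i * (column i V \<bullet> column j Q)
           = column i U \<bullet> (\<Delta> *v column j Q)"
    and "s j * (column i V \<bullet> column j Q) - \<sigma> i * (column i U \<bullet> column j P)
           = column i V \<bullet> (transpose \<Delta> *v column j P)"
proof -
  have "column i U \<bullet> ((B + \<Delta>) *v column j Q)
      = \<sigma> i * (column i V \<bullet> column j Q) + column i U \<bullet> (\<Delta> *v column j Q)"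
    using inner_matrix_vector_transpose[of B "column j Q" "column i U"]
    by (simp add: matrix_vector_mult_add_rdistrib inner_add_right inner_commute
        svd_column_relations(2)[OF B])
  then show "s j * (column i U \<bullet> column j P) - \<sigma> i * (column i V \<bullet> column j Q)
      = column i U \<bullet> (\<Delta> *v column j Q)"
    by (simp add: svd_column_relations(1)[OF B\<Delta>])
  have "column i V \<bullet> (transpose (B + \<Delta>) *v column j P)
      = \<sigma> i * (column i U \<bullet> column j P) + column i V \<bullet> (transpose \<Delta> *v column j P)"
    using inner_matrix_vector_transpose[of B "column i V" "column j P"]
    by (simp add: transpose_add matrix_vector_mult_add_rdistrib inner_add_right inner_commute
        svd_column_relations(1)[OF B])
  then show "s j * (column i V \<bullet> column j Q) - \<sigma> i * (column i U \<bullet> column j P)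
      = column i V \<bullet> (transpose \<Delta> *v column j P)"
    by (simp add: svd_column_relations(2)[OF B\<Delta>])
qed

lemma column_diff: "column j (A - B) = column j A - column j (B::'a::ab_group_add^'n^'m)"
  by (simp add: vec_eq_iff column_def)

lemma wedin_left_singular_vectors:
  fixes B \<Delta> U V P Q :: "real^'n^'n"
  assumes B: "is_svd B U \<sigma> V" and B\<Delta>: "is_svd (B + \<Delta>) P s Q"
    and sign: "\<And>i. 0 \<le> column i U \<bullet> column i P"
    and g: "0 < g" and gap: "\<And>i j. i \<noteq> j \<Longrightarrow> g \<le> \<bar>s j - \<sigma> i\<bar>"
  shows "g^2 * (fro_norm (U - P))^2 \<le> 4 * (fro_norm \<Delta>)^2"
proof -
  have U: "orthogonal_matrix U" and V: "orthogonal_matrix V" and \<sigma>: "\<And>i. 0 \<le> \<sigma> i"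
    using B by (auto simp: is_svd_def)
  have P: "orthogonal_matrix P" and Q: "orthogonal_matrix Q" and s: "\<And>i. 0 \<le> s i"
    using B\<Delta> by (auto simp: is_svd_def)
  define X where "X i j = column i U \<bullet> column j P" for i j
  define a where "a i j = column i U \<bullet> (\<Delta> *v column j Q)" for i j
  define b where "b i j = column i V \<bullet> (transpose \<Delta> *v column j P)" for i j
  have cross: "g^2 * (X i j)^2 \<le> (a i j)^2 + (b i j)^2" if "i \<noteq> j" for i j
    unfolding X_def a_def b_def
    by (rule gap_bound_cross_equations[OF s \<sigma> g gap[OF that]
          svd_perturbation_cross_relations[OF B B\<Delta>]])
  have off_diag: "1 - (X j j)^2 = (\<Sum>i\<in>UNIV - {j}. (X i j)^2)" for j
  proof -
    have "(\<Sum>i\<in>UNIV. (X i j)^2) = 1"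
      using sum_inner_column_sq[OF U, of "column j P"] inner_columns_orthogonal_matrix[OF P, of j j]
      by (simp add: X_def inner_commute)
    then show ?thesis using sum.remove[of UNIV j "\<lambda>i. (X i j)^2"] by simp
  qed
  have column_bound:
    "g^2 * (column j (U - P) \<bullet> column j (U - P)) \<le> 2 * (\<Sum>i\<in>UNIV. (a i j)^2 + (b i j)^2)" for j
  proof -
    have "g^2 * (column j (U - P) \<bullet> column j (U - P)) \<le> g^2 * (2 * (1 - (X j j)^2))"
      unfolding column_diff X_def
      by (intro mult_left_mono unit_vectors_dist_sq_le)
        (simp_all add: inner_columns_orthogonal_matrix U P sign)
    also have "\<dots> = 2 * (\<Sum>i\<in>UNIV - {j}. g^2 * (X i j)^2)"
      by (simp add: off_diag sum_distrib_left mult.left_commute)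
    also have "\<dots> \<le> 2 * (\<Sum>i\<in>UNIV - {j}. (a i j)^2 + (b i j)^2)"
      using cross by (intro mult_left_mono sum_mono) auto
    also have "\<dots> \<le> 2 * (\<Sum>i\<in>UNIV. (a i j)^2 + (b i j)^2)"
      by (intro mult_left_mono sum_mono2) auto
    finally show ?thesis .
  qed
  have "g^2 * (fro_norm (U - P))^2 = (\<Sum>j\<in>UNIV. g^2 * (column j (U - P) \<bullet> column j (U - P)))"
    by (simp add: fro_norm_sq_columns sum_distrib_left)
  also have "\<dots> \<le> 2 * ((\<Sum>j\<in>UNIV. \<Sum>i\<in>UNIV. (a i j)^2) + (\<Sum>j\<in>UNIV. \<Sum>i\<in>UNIV. (b i j)^2))"
    using sum_mono[OF column_bound] by (simp add: sum_distrib_left sum.distrib)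
  also have "\<dots> = 4 * (fro_norm \<Delta>)^2"
    using fro_norm_sq_orthogonal_coordinates[OF U Q, of \<Delta>]
      fro_norm_sq_orthogonal_coordinates[OF V P, of "transpose \<Delta>"]
    by (simp add: a_def b_def fro_norm_transpose)
  finally show ?thesis .
qed

lemma left_singular_vectors_perturbation:
  fixes B \<Delta> U V P Q :: "real^'k::{finite,linorder}^'k::{finite,linorder}"
  assumes B: "is_svd B U \<sigma> V" "weak_decr \<sigma>" and B\<Delta>: "is_svd (B + \<Delta>) P s Q" "weak_decr s"
    and sign: "\<forall>i. 0 \<le> column i U \<bullet> column i P"
    and \<alpha>: "0 < \<alpha>" "\<And>i j. i \<noteq> j \<Longrightarrow> \<alpha> \<le> \<bar>\<sigma> i - \<sigma> j\<bar>"
    and \<epsilon>: "fro_norm \<Delta> < \<epsilon>" "\<epsilon> \<le> \<alpha> / 4"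
  shows "fro_norm (U - P) \<le> 2 * sqrt 2 * \<epsilon> / \<alpha>"
proof -
  have "\<bar>s j - \<sigma> j\<bar> < \<alpha> / 4" for j
    using weyl_singular_values[OF B B\<Delta>, of j] \<epsilon> by linarith
  then have "3 * \<alpha> / 4 \<le> \<bar>s j - \<sigma> i\<bar>" if "i \<noteq> j" for i j
    using \<alpha>(2)[OF that] \<open>\<bar>s j - \<sigma> j\<bar> < \<alpha> / 4\<close> by linarith
  then have "(3 * \<alpha> / 4)^2 * (fro_norm (U - P))^2 \<le> 4 * (fro_norm \<Delta>)^2"
    using sign \<alpha>(1) by (intro wedin_left_singular_vectors[OF B(1) B\<Delta>(1)]) auto
  also have "\<dots> \<le> 4 * \<epsilon>^2"
    using \<epsilon>(1) fro_norm_nonneg[of \<Delta>] by (simp add: power_mono)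
  finally have "9 * (\<alpha>^2 * (fro_norm (U - P))^2) \<le> 64 * \<epsilon>^2"
    by (simp add: power_divide power_mult_distrib)
  then have "\<alpha>^2 * (fro_norm (U - P))^2 \<le> 8 * \<epsilon>^2"
    using zero_le_power2[of \<epsilon>] by linarith
  then have "(fro_norm (U - P))^2 \<le> (2 * sqrt 2 * \<epsilon> / \<alpha>)^2"
    using \<alpha>(1) by (simp add: power_divide power_mult_distrib field_simps)
  then show ?thesis
    by (rule power2_le_imp_le) (use \<epsilon> \<alpha>(1) fro_norm_nonneg[of \<Delta>] in simp)
qed

theorem corollaryC1:
  fixes \<sigma> :: "'k::{finite,linorder} \<Rightarrow> real"
    and B \<Delta> U V :: "real^'k::{finite,linorder}^'k::{finite,linorder}" and \<epsilon> :: real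
  assumes "CARD('k::{finite,linorder}) \<ge> 2"
    and "is_svd B U \<sigma> V"
    and "strict_decr \<sigma>"
    and "\<forall>i. 0 < \<sigma> i"
    and "0 < \<epsilon>"
    and "fro_norm \<Delta> < \<epsilon>"
    and "\<epsilon> \<le> (sv_gap \<sigma>)^2 /
           (sqrt 2 * (2 * fro_norm B * (1 + sqrt (1 - 1 / real CARD('k::{finite,linorder})))
             + sqrt ((sv_gap \<sigma>)^2 + 4 * (fro_norm B)^2 * (1 + sqrt (1 - 1 / real CARD('k::{finite,linorder})))^2)))"
  shows "\<exists>U' V' \<sigma>'. is_svd (B + \<Delta>) U' \<sigma>' V'
           \<and> weak_decr \<sigma>'
           \<and> fro_norm (U - U') \<le> 2 * sqrt 2 * \<epsilon> / sv_gap \<sigma>"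
proof -
  define \<alpha> where "\<alpha> = sv_gap \<sigma>"
  have \<alpha>_pos: "0 < \<alpha>"
    unfolding \<alpha>_def using strict_decr_imp_inj[OF assms(3)] assms(1) by (rule sv_gap_pos)
  have "\<epsilon> \<le> \<alpha> / 4"
    using assms(7) perturbation_threshold_le_quarter_gap[OF \<alpha>_pos[unfolded \<alpha>_def]
        sv_gap_le_fro_norm[OF assms(2,1)], of "real CARD('k)"] assms(1)
    unfolding \<alpha>_def by linarith
  obtain P s Q where svd: "is_svd (B + \<Delta>) P s Q" and s_decr: "weak_decr s"
    and sign: "\<forall>i. 0 \<le> column i U \<bullet> column i P"
    using exists_svd_aligned[of "B + \<Delta>" "\<lambda>i. column i U"] by blast
  have "fro_norm (U - P) \<le> 2 * sqrt 2 * \<epsilon> / \<alpha>"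
    using assms(2) strict_decr_imp_weak_decr[OF assms(3)] svd s_decr sign \<alpha>_pos
      sv_gap_le[of _ _ \<sigma>] assms(6) \<open>\<epsilon> \<le> \<alpha> / 4\<close>
    unfolding \<alpha>_def by (rule left_singular_vectors_perturbation)
  then show ?thesis using svd s_decr unfolding \<alpha>_def by blast
qed

end
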